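(* For $X\in\mathbb{L}^0(\mathbb{R},\mathcal{F})$ let $I(X)=E(X\mid\mathcal{H}):=E(X^+\mid\mathcal{H})-E(X^-\mid\mathcal{H})$. For $X,Y\in\mathbb{L}^0(\mathbb{R},\mathcal{F})$ we have $I(X+Y)=I(X)+I(Y)$ a.s. on the set $F=\bigcup_{i=1}^5F_i\in\mathcal{H}$, where $F_1=\{E(|X|\mid\mathcal{H})\in\mathbb{R},\ E(|Y|\mid\mathcal{H})\in\mathbb{R}\}$, $F_2=\{E(X^+\mid\mathcal{H})=+\infty,\ E(X^-\mid\mathcal{H})\in\mathbb{R},\ E(Y^-\mid\mathcal{H})\in\mathbb{R}\}$, $F_3=\{E(X^-\mid\mathcal{H})=+\infty,\ E(X^+\mid\mathcal{H})\in\mathbb{R},\ E(Y^+\mid\mathcal{H})\in\mathbb{R}\}$, $F_4=\{E(Y^+\mid\mathcal{H})=+\infty,\ E(X^-\mid\mathcal{H})\in\mathbb{R},\ E(Y^-\mid\mathcal{H})\in\mathbb{R}\}$, $F_5=\{E(Y^-\mid\mathcal{H})=+\infty,\ E(X^+\mid\mathcal{H})\in\mathbb{R},\ E(Y^+\mid\mathcal{H})\in\mathbb{R}\}$.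
   Context: Let $(\Omega,\mathcal{F},\mathbb{P})$ be a probability space with $\mathcal{F}$ complete and $\mathcal{H}\subseteq\mathcal{F}$ a complete sub-$\sigma$-algebra. $\mathbb{L}^0(\mathbb{R},\mathcal{F})$ is the set of real-valued $\mathcal{F}$-measurable random variables. For $Z\ge0$, $E(Z\mid\mathcal{H})$ denotes the (generalized) conditional expectation with values in $[0,+\infty]$. $X^+=\max(X,0)$, $X^-=\max(-X,0)$. Arithmetic on $\overline{\mathbb{R}}=\mathbb{R}\cup\{\pm\infty\}$ uses the conventions $r\pm\infty=\pm\infty$ for $r\in\mathbb{R}$, $\infty-\infty=0$, $\infty+\infty=\infty$, $0\times(\pm\infty)=0$. *)

theory Defs
  imports "HOL-Probability.Probability"
begin

text \<open>Addition on the extended reals with the paper's convention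
  (infinity minus infinity is 0); otherwise it is the usual ereal addition.\<close>
definition ext_add :: "ereal \<Rightarrow> ereal \<Rightarrow> ereal" where
  "ext_add a b = (if (a = \<infinity> \<and> b = -\<infinity>) \<or> (a = -\<infinity> \<and> b = \<infinity>) then 0 else a + b)"

definition ext_sub :: "ereal \<Rightarrow> ereal \<Rightarrow> ereal" where
  "ext_sub a b = ext_add a (- b)"

definition pos_part :: "('a \<Rightarrow> real) \<Rightarrow> 'a \<Rightarrow> ennreal" where
  "pos_part X = (\<lambda>x. ennreal (max (X x) 0))"

definition neg_part :: "('a \<Rightarrow> real) \<Rightarrow> 'a \<Rightarrow> ennreal" where
  "neg_part X = (\<lambda>x. ennreal (max (- X x) 0))"

definition gen_cond_exp :: "'a measure \<Rightarrow> 'a measure \<Rightarrow> ('a \<Rightarrow> real) \<Rightarrow> 'a \<Rightarrow> ereal" where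
  "gen_cond_exp M H X = (\<lambda>x. ext_sub (enn2ereal (nn_cond_exp M H (pos_part X) x))
                                      (enn2ereal (nn_cond_exp M H (neg_part X) x)))"

end

theory Submission
  imports Defs
begin

text \<open>Pointwise, \<open>(X + Y)\<^sup>+ + X\<^sup>- + Y\<^sup>- = (X + Y)\<^sup>- + X\<^sup>+ + Y\<^sup>+\<close>, together with
  \<open>(X + Y)\<^sup>+ \<le> X\<^sup>+ + Y\<^sup>+\<close> and \<open>(X + Y)\<^sup>- \<le> X\<^sup>- + Y\<^sup>-\<close>; conditional expectation is additive
  and monotone, so the same relations hold almost surely between the conditional expectations
  of the six parts. The remaining work is arithmetic in \<open>[-\<infinity>, \<infinity>]\<close>: if the
  conditional expectations of \<open>X\<^sup>-\<close> and \<open>Y\<^sup>-\<close> are finite, then so is that of \<open>(X + Y)\<^sup>-\<close>,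
  no \<open>\<infinity> - \<infinity>\<close> occurs, and the balance identity can be rearranged; the case of finite
  positive parts follows by negation. Each of \<open>F\<^sub>1, \<dots>, F\<^sub>5\<close> lies in one of these two cases.\<close>

lemma uminus_ext_add: "- ext_add a b = ext_add (- a) (- b)"
  by (cases a; cases b) (auto simp: ext_add_def)

lemma uminus_ext_sub: "- ext_sub a b = ext_sub b a"
  by (cases a; cases b) (auto simp: ext_sub_def ext_add_def)

lemma ext_sub_balance_real:
  fixes a p q :: ereal and b n r :: real
  assumes "a + n + r = b + p + q" and "0 \<le> p" and "0 \<le> q"
  shows "ext_sub a b = ext_add (ext_sub p n) (ext_sub q r)"
  using assms by (cases a; cases p; cases q) (auto simp: ext_sub_def ext_add_def)

lemma ext_sub_balance_neg_finite:
  fixes a b p n q r :: ennreal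
  assumes balance: "a + n + r = b + p + q" and "b \<le> n + r" and "n < \<infinity>" "r < \<infinity>"
  shows "ext_sub (enn2ereal a) (enn2ereal b)
           = ext_add (ext_sub (enn2ereal p) (enn2ereal n)) (ext_sub (enn2ereal q) (enn2ereal r))"
proof -
  have "n + r < \<infinity>"
    using \<open>n < \<infinity>\<close> \<open>r < \<infinity>\<close> by (simp add: infinity_ennreal_def)
  with \<open>b \<le> n + r\<close> have "b < \<infinity>"
    by (rule le_less_trans)
  have finite_real: "\<exists>t\<ge>0. x = ennreal t" if "x < \<infinity>" for x :: ennreal
    using that by (simp add: less_top_ennreal infinity_ennreal_def)
  obtain b' n' r' where "b = ennreal b'" "n = ennreal n'" "r = ennreal r'"
    and "b' \<ge> 0" "n' \<ge> 0" "r' \<ge> 0"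
    using finite_real[OF \<open>b < \<infinity>\<close>] finite_real[OF \<open>n < \<infinity>\<close>] finite_real[OF \<open>r < \<infinity>\<close>]
    by blast
  moreover have "enn2ereal a + n' + r' = b' + enn2ereal p + enn2ereal q"
    using arg_cong[OF balance, of enn2ereal] calculation by (simp add: plus_ennreal.rep_eq)
  ultimately show ?thesis
    using ext_sub_balance_real[of "enn2ereal a" n' r' b' "enn2ereal p" "enn2ereal q"] by simp
qed

lemma ext_sub_balance:
  fixes a b p n q r :: ennreal
  assumes balance: "a + n + r = b + p + q" and "a \<le> p + q" and "b \<le> n + r"
    and finite: "(n < \<infinity> \<and> r < \<infinity>) \<or> (p < \<infinity> \<and> q < \<infinity>)"
  shows "ext_sub (enn2ereal a) (enn2ereal b)
           = ext_add (ext_sub (enn2ereal p) (enn2ereal n)) (ext_sub (enn2ereal q) (enn2ereal r))"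
  using finite
proof
  assume "n < \<infinity> \<and> r < \<infinity>"
  then show ?thesis
    using assms by (intro ext_sub_balance_neg_finite) auto
next
  assume "p < \<infinity> \<and> q < \<infinity>"
  then have "ext_sub (enn2ereal b) (enn2ereal a)
               = ext_add (ext_sub (enn2ereal n) (enn2ereal p)) (ext_sub (enn2ereal r) (enn2ereal q))"
    using assms by (intro ext_sub_balance_neg_finite) auto
  then show ?thesis
    by (metis uminus_ext_add uminus_ext_sub)
qed

lemma borel_measurable_pos_part [measurable]:
  "X \<in> borel_measurable M \<Longrightarrow> pos_part X \<in> borel_measurable M"
  unfolding pos_part_def by measurable

lemma borel_measurable_neg_part [measurable]:
  "X \<in> borel_measurable M \<Longrightarrow> neg_part X \<in> borel_measurable M"
  unfolding neg_part_def by measurable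

lemma pos_part_add_neg_part: "pos_part X x + neg_part X x = ennreal \<bar>X x\<bar>"
  by (simp add: pos_part_def neg_part_def ennreal_plus[symmetric] max_def del: ennreal_plus)

lemma pos_part_add_le: "pos_part (\<lambda>z. X z + Y z) x \<le> pos_part X x + pos_part Y x"
proof -
  have "max (X x + Y x) 0 \<le> max (X x) 0 + max (Y x) 0"
    by (simp add: max_def)
  then show ?thesis
    unfolding pos_part_def by (metis ennreal_leI ennreal_plus max.cobounded2)
qed

lemma neg_part_add_le: "neg_part (\<lambda>z. X z + Y z) x \<le> neg_part X x + neg_part Y x"
proof -
  have "max (- (X x + Y x)) 0 \<le> max (- X x) 0 + max (- Y x) 0"
    by (simp add: max_def)
  then show ?thesis
    unfolding neg_part_def by (metis ennreal_leI ennreal_plus max.cobounded2)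
qed

lemma pos_part_neg_part_add_balance:
  "pos_part (\<lambda>z. X z + Y z) x + neg_part X x + neg_part Y x
     = neg_part (\<lambda>z. X z + Y z) x + pos_part X x + pos_part Y x"
proof -
  have "max (X x + Y x) 0 + max (- X x) 0 + max (- Y x) 0
          = max (- (X x + Y x)) 0 + max (X x) 0 + max (Y x) 0"
    by (simp add: max_def)
  then show ?thesis
    unfolding pos_part_def neg_part_def
    by (simp only: ennreal_plus[symmetric] max.cobounded2 add_nonneg_nonneg)
qed

context sigma_finite_subalgebra
begin

lemma nn_cond_exp_abs:
  assumes [measurable]: "X \<in> borel_measurable M"
  shows "AE x in M. nn_cond_exp M F (\<lambda>z. ennreal \<bar>X z\<bar>) x
                      = nn_cond_exp M F (pos_part X) x + nn_cond_exp M F (neg_part X) x"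
proof -
  have "AE x in M. nn_cond_exp M F (pos_part X) x + nn_cond_exp M F (neg_part X) x
                     = nn_cond_exp M F (\<lambda>x. pos_part X x + neg_part X x) x"
    by (rule nn_cond_exp_sum) auto
  then show ?thesis
    by eventually_elim (simp add: pos_part_add_neg_part)
qed

lemma nn_cond_exp_le_add:
  assumes "\<And>x. h x \<le> f x + g x"
    and [measurable]: "f \<in> borel_measurable M" "g \<in> borel_measurable M" "h \<in> borel_measurable M"
  shows "AE x in M. nn_cond_exp M F h x \<le> nn_cond_exp M F f x + nn_cond_exp M F g x"
proof -
  have "AE x in M. nn_cond_exp M F h x \<le> nn_cond_exp M F (\<lambda>x. f x + g x) x"
    by (rule nn_cond_exp_mono) (auto simp: assms(1))
  moreover have "AE x in M. nn_cond_exp M F f x + nn_cond_exp M F g x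
                              = nn_cond_exp M F (\<lambda>x. f x + g x) x"
    by (rule nn_cond_exp_sum) auto
  ultimately show ?thesis
    by eventually_elim simp
qed

lemma nn_cond_exp_add3_eq:
  assumes "\<And>x. f1 x + f2 x + f3 x = g1 x + g2 x + g3 x"
    and [measurable]: "f1 \<in> borel_measurable M" "f2 \<in> borel_measurable M" "f3 \<in> borel_measurable M"
      "g1 \<in> borel_measurable M" "g2 \<in> borel_measurable M" "g3 \<in> borel_measurable M"
  shows "AE x in M. nn_cond_exp M F f1 x + nn_cond_exp M F f2 x + nn_cond_exp M F f3 x
                      = nn_cond_exp M F g1 x + nn_cond_exp M F g2 x + nn_cond_exp M F g3 x"
proof -
  have "AE x in M. nn_cond_exp M F f1 x + nn_cond_exp M F f2 x
                     = nn_cond_exp M F (\<lambda>x. f1 x + f2 x) x"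
    and "AE x in M. nn_cond_exp M F (\<lambda>x. f1 x + f2 x) x + nn_cond_exp M F f3 x
                     = nn_cond_exp M F (\<lambda>x. f1 x + f2 x + f3 x) x"
    and "AE x in M. nn_cond_exp M F g1 x + nn_cond_exp M F g2 x
                     = nn_cond_exp M F (\<lambda>x. g1 x + g2 x) x"
    and "AE x in M. nn_cond_exp M F (\<lambda>x. g1 x + g2 x) x + nn_cond_exp M F g3 x
                     = nn_cond_exp M F (\<lambda>x. g1 x + g2 x + g3 x) x"
    by (rule nn_cond_exp_sum; simp)+
  then show ?thesis
    by eventually_elim (simp add: assms(1))
qed

lemma gen_cond_exp_add:
  assumes [measurable]: "X \<in> borel_measurable M" "Y \<in> borel_measurable M"
  shows "AE x in M.
           (nn_cond_exp M F (neg_part X) x < \<infinity> \<and> nn_cond_exp M F (neg_part Y) x < \<infinity>) \<or>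
           (nn_cond_exp M F (pos_part X) x < \<infinity> \<and> nn_cond_exp M F (pos_part Y) x < \<infinity>) \<longrightarrow>
             gen_cond_exp M F (\<lambda>z. X z + Y z) x = ext_add (gen_cond_exp M F X x) (gen_cond_exp M F Y x)"
proof -
  have "AE x in M. nn_cond_exp M F (pos_part (\<lambda>z. X z + Y z)) x
           + nn_cond_exp M F (neg_part X) x + nn_cond_exp M F (neg_part Y) x
         = nn_cond_exp M F (neg_part (\<lambda>z. X z + Y z)) x
           + nn_cond_exp M F (pos_part X) x + nn_cond_exp M F (pos_part Y) x"
    by (rule nn_cond_exp_add3_eq[OF pos_part_neg_part_add_balance]) auto
  moreover have "AE x in M. nn_cond_exp M F (pos_part (\<lambda>z. X z + Y z)) x
                   \<le> nn_cond_exp M F (pos_part X) x + nn_cond_exp M F (pos_part Y) x"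
    by (rule nn_cond_exp_le_add[OF pos_part_add_le]) auto
  moreover have "AE x in M. nn_cond_exp M F (neg_part (\<lambda>z. X z + Y z)) x
                   \<le> nn_cond_exp M F (neg_part X) x + nn_cond_exp M F (neg_part Y) x"
    by (rule nn_cond_exp_le_add[OF neg_part_add_le]) auto
  ultimately show ?thesis
    unfolding gen_cond_exp_def by eventually_elim (rule impI, rule ext_sub_balance)
qed

end

theorem mainTheorem17:
  fixes M H :: "'a measure" and X Y :: "'a \<Rightarrow> real"
  assumes "prob_space M"
    and "complete_measure M"
    and "subalgebra M H"
    and "null_sets M \<subseteq> sets H"
    and "X \<in> borel_measurable M"
    and "Y \<in> borel_measurable M"
  defines "F1 \<equiv> {x \<in> space M. nn_cond_exp M H (\<lambda>z. ennreal \<bar>X z\<bar>) x < \<infinity>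
                               \<and> nn_cond_exp M H (\<lambda>z. ennreal \<bar>Y z\<bar>) x < \<infinity>}"
    and "F2 \<equiv> {x \<in> space M. nn_cond_exp M H (pos_part X) x = \<infinity>
                               \<and> nn_cond_exp M H (neg_part X) x < \<infinity>
                               \<and> nn_cond_exp M H (neg_part Y) x < \<infinity>}"
    and "F3 \<equiv> {x \<in> space M. nn_cond_exp M H (neg_part X) x = \<infinity>
                               \<and> nn_cond_exp M H (pos_part X) x < \<infinity>
                               \<and> nn_cond_exp M H (pos_part Y) x < \<infinity>}"
    and "F4 \<equiv> {x \<in> space M. nn_cond_exp M H (pos_part Y) x = \<infinity>
                               \<and> nn_cond_exp M H (neg_part X) x < \<infinity>
                               \<and> nn_cond_exp M H (neg_part Y) x < \<infinity>}"
    and "F5 \<equiv> {x \<in> space M. nn_cond_exp M H (neg_part Y) x = \<infinity>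
                               \<and> nn_cond_exp M H (pos_part X) x < \<infinity>
                               \<and> nn_cond_exp M H (pos_part Y) x < \<infinity>}"
  shows "F1 \<union> F2 \<union> F3 \<union> F4 \<union> F5 \<in> sets H \<and>
         (AE x in M. x \<in> F1 \<union> F2 \<union> F3 \<union> F4 \<union> F5 \<longrightarrow>
            gen_cond_exp M H (\<lambda>z. X z + Y z) x
              = ext_add (gen_cond_exp M H X x) (gen_cond_exp M H Y x))"
proof
  interpret finite_measure_subalgebra M H
    using assms(1,3) by (simp add: finite_measure_subalgebra_def finite_measure_subalgebra_axioms_def
        prob_space_def)
  have space_H: "space H = space M"
    using subalg by (simp add: subalgebra_def)
  show "F1 \<union> F2 \<union> F3 \<union> F4 \<union> F5 \<in> sets H"
    unfolding F1_def F2_def F3_def F4_def F5_def space_H[symmetric] by measurable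
  have "AE x in M. x \<in> F1 \<union> F2 \<union> F3 \<union> F4 \<union> F5 \<longrightarrow>
          (nn_cond_exp M H (neg_part X) x < \<infinity> \<and> nn_cond_exp M H (neg_part Y) x < \<infinity>) \<or>
          (nn_cond_exp M H (pos_part X) x < \<infinity> \<and> nn_cond_exp M H (pos_part Y) x < \<infinity>)"
    using nn_cond_exp_abs[OF assms(5)] nn_cond_exp_abs[OF assms(6)]
    by eventually_elim (auto simp: F1_def F2_def F3_def F4_def F5_def)
  with gen_cond_exp_add[OF assms(5,6)]
  show "AE x in M. x \<in> F1 \<union> F2 \<union> F3 \<union> F4 \<union> F5 \<longrightarrow>
          gen_cond_exp M H (\<lambda>z. X z + Y z) x = ext_add (gen_cond_exp M H X x) (gen_cond_exp M H Y x)"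
    by eventually_elim blast
qed

end
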